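(* Let $p=2$, and let $F$, $K=F(\sqrt{a})$, $G=\langle\sigma\rangle$, $J$ and $N$ be as in the context. Then, as an $\mathbb{F}_2[G]$-module, $J$ decomposes as an internal direct sum $$J=X\oplus Y\oplus Z,$$ where (1) $X$ has $\mathbb{F}_2$-dimension $1$ if $-1\in N(K^\times)$, and $X=\{0\}$ otherwise; (2) $Y$ is a free $\mathbb{F}_2[G]$-submodule with $Y^G=N(J)$; (3) $Z$ is a trivial $\mathbb{F}_2[G]$-module. Moreover, the rank of any maximal free $\mathbb{F}_2[G]$-submodule of $J$ equals $\dim_{\mathbb{F}_2}N(J)$.
   Context: Let $F$ be a field of characteristic different from $2$. Let $a\in F^\times\setminus F^{\times 2}$ and $K=F(\sqrt{a})$, a quadratic extension; $K^\times=K\setminus\{0\}$. Let $G=\mathrm{Gal}(K/F)=\langle\sigma\rangle$ with $\sigma(\sqrt a)=-\sqrt a$. Let $J=K^\times/K^{\times 2}$, an $\mathbb{F}_2[G]$-module (elements denoted $[\gamma]$, $\gamma\in K^\times$). For a $G$-module $V$, $V^G$ denotes the submodule of $G$-fixed elements. Let $N=1+\sigma\in\mathbb{F}_2[G]$, also viewed as the endomorphism of $J$ it induces; $N(J)$ is its image. $N(K^\times)\subseteq F^\times$ denotes the group of norms from $K$ to $F$. *)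

theory Defs
  imports Main "HOL-Library.Equipollence"
begin

text \<open>The field K is the type 'k; the generator sigma of Gal(K/F) is a field
automorphism of order 2; F is its fixed field.\<close>

definition qaut :: "('k::field \<Rightarrow> 'k) \<Rightarrow> bool" where
  "qaut \<sigma> \<longleftrightarrow> bij \<sigma> \<and> (\<forall>x y. \<sigma> (x + y) = \<sigma> x + \<sigma> y) \<and>
     (\<forall>x y. \<sigma> (x * y) = \<sigma> x * \<sigma> y) \<and> \<sigma> 1 = 1 \<and>
     (\<forall>x. \<sigma> (\<sigma> x) = x) \<and> \<sigma> \<noteq> id"

definition fixfield :: "('k::field \<Rightarrow> 'k) \<Rightarrow> 'k set" where
  "fixfield \<sigma> = {x. \<sigma> x = x}"

text \<open>Square classes: [gamma] = gamma K^{x2}; J = K^x / K^{x2} as a set of cosets.\<close>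

definition sqclass :: "'k::field \<Rightarrow> 'k set" where
  "sqclass g = {g * s ^ 2 | s. s \<noteq> 0}"

definition Jgrp :: "'k::field set set" where
  "Jgrp = sqclass ` {x. x \<noteq> 0}"

definition jmul :: "'k::field set \<Rightarrow> 'k set \<Rightarrow> 'k set" where
  "jmul A B = {x * y | x y. x \<in> A \<and> y \<in> B}"

definition jone :: "'k::field set" where
  "jone = sqclass 1"

definition jsig :: "('k::field \<Rightarrow> 'k) \<Rightarrow> 'k set \<Rightarrow> 'k set" where
  "jsig \<sigma> A = \<sigma> ` A"

text \<open>The norm endomorphism N = 1 + sigma, and its image N(J).\<close>
definition jnorm :: "('k::field \<Rightarrow> 'k) \<Rightarrow> 'k set \<Rightarrow> 'k set" where
  "jnorm \<sigma> A = jmul A (jsig \<sigma> A)"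

definition NJ :: "('k::field \<Rightarrow> 'k) \<Rightarrow> 'k set set" where
  "NJ \<sigma> = jnorm \<sigma> ` Jgrp"

definition jsubspace :: "'k::field set set \<Rightarrow> bool" where
  "jsubspace V \<longleftrightarrow> V \<subseteq> Jgrp \<and> jone \<in> V \<and> (\<forall>A\<in>V. \<forall>B\<in>V. jmul A B \<in> V)"

definition jsubmodule :: "('k::field \<Rightarrow> 'k) \<Rightarrow> 'k set set \<Rightarrow> bool" where
  "jsubmodule \<sigma> V \<longleftrightarrow> jsubspace V \<and> (\<forall>A\<in>V. jsig \<sigma> A \<in> V)"

inductive_set jspan :: "'k::field set set \<Rightarrow> 'k set set" for S where
  one: "jone \<in> jspan S"
| mul: "s \<in> S \<Longrightarrow> x \<in> jspan S \<Longrightarrow> jmul s x \<in> jspan S"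

definition jindep :: "'k::field set set \<Rightarrow> bool" where
  "jindep S \<longleftrightarrow> (\<forall>s\<in>S. s \<notin> jspan (S - {s}))"

definition jbasis :: "'k::field set set \<Rightarrow> 'k set set \<Rightarrow> bool" where
  "jbasis B V \<longleftrightarrow> B \<subseteq> V \<and> jindep B \<and> jspan B = V"

definition jfree_basis :: "('k::field \<Rightarrow> 'k) \<Rightarrow> 'k set set \<Rightarrow> 'k set set \<Rightarrow> bool" where
  "jfree_basis \<sigma> B V \<longleftrightarrow> B \<inter> jsig \<sigma> ` B = {} \<and> jbasis (B \<union> jsig \<sigma> ` B) V"

definition jfree :: "('k::field \<Rightarrow> 'k) \<Rightarrow> 'k set set \<Rightarrow> bool" where
  "jfree \<sigma> V \<longleftrightarrow> jsubmodule \<sigma> V \<and> (\<exists>B. jfree_basis \<sigma> B V)"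

definition jmax_free :: "('k::field \<Rightarrow> 'k) \<Rightarrow> 'k set set \<Rightarrow> bool" where
  "jmax_free \<sigma> V \<longleftrightarrow> jfree \<sigma> V \<and> (\<forall>W. jfree \<sigma> W \<and> V \<subseteq> W \<longrightarrow> W = V)"

definition jfixed :: "('k::field \<Rightarrow> 'k) \<Rightarrow> 'k set set \<Rightarrow> 'k set set" where
  "jfixed \<sigma> V = {A \<in> V. jsig \<sigma> A = A}"

definition jdirect3 :: "'k::field set set \<Rightarrow> 'k set set \<Rightarrow> 'k set set \<Rightarrow> 'k set set \<Rightarrow> bool" where
  "jdirect3 V X Y Z \<longleftrightarrow> (\<forall>A\<in>V. \<exists>!(x, y, z). x \<in> X \<and> y \<in> Y \<and> z \<in> Z \<and> A = jmul x (jmul y z))"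

end

(*
  The square classes J form an F_2-vector space with the involution sigma.  Call B a
  free family if the classes b, sigma b (b in B) are pairwise distinct and independent.
  They span a free F_2[G]-submodule whose sigma-fixed elements are spanned by the
  independent norms N b (b in B).  If N gamma is not in the span of a free family, gamma
  can be adjoined to the family; hence the span Y of a maximal free family (Zorn), and
  likewise every maximal free submodule, contains N(J).  So Y^G = N(J) and the N b form
  a basis of N(J), which is the rank statement.  Multiplying a class by an element of Y
  with the same norm makes it sigma-fixed, so it remains to split J^G.  If
  u sigma(u) = -1, Hilbert 90 gives gamma with sigma(gamma) = u^2 gamma; its class is
  fixed and, as char F is not 2, not a norm: it spans X.  Finally Z is any complement
  of N(J) X in J^G.
*)
theory Submission
  imports Defs
begin

lemma jmul_sqclass: "jmul (sqclass g) (sqclass h) = sqclass (g * h)"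
proof (rule set_eqI, rule iffI)
  fix x assume "x \<in> jmul (sqclass g) (sqclass h)"
  then obtain s t where "s \<noteq> 0" "t \<noteq> 0" "x = g * s\<^sup>2 * (h * t\<^sup>2)"
    unfolding jmul_def sqclass_def by blast
  then show "x \<in> sqclass (g * h)"
    unfolding sqclass_def
    by (intro CollectI exI[of _ "s * t"]) (simp add: power_mult_distrib algebra_simps)
next
  fix x assume "x \<in> sqclass (g * h)"
  then obtain r where "r \<noteq> 0" "x = g * h * r\<^sup>2" unfolding sqclass_def by blast
  then show "x \<in> jmul (sqclass g) (sqclass h)"
    unfolding jmul_def sqclass_def
    by (intro CollectI exI[of _ "g * r\<^sup>2"] exI[of _ h]) (auto intro: exI[of _ 1])
qed

lemma sqclass_square:
  fixes g :: "'k::field"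
  assumes "g \<noteq> 0"
  shows "sqclass (g * g) = jone"
proof (rule set_eqI, rule iffI)
  fix x :: 'k assume "x \<in> sqclass (g * g)"
  then obtain s where "s \<noteq> 0" "x = g * g * s\<^sup>2" unfolding sqclass_def by blast
  then show "x \<in> jone"
    unfolding jone_def sqclass_def using assms
    by (intro CollectI exI[of _ "g * s"]) (simp add: power2_eq_square algebra_simps)
next
  fix x :: 'k assume "x \<in> jone"
  then obtain s where "s \<noteq> 0" "x = 1 * s\<^sup>2" unfolding jone_def sqclass_def by blast
  then show "x \<in> sqclass (g * g)"
    unfolding sqclass_def using assms
    by (intro CollectI exI[of _ "s / g"]) (simp add: power2_eq_square field_simps)
qed

lemma sqclass_self_mem: "g \<in> sqclass g"
  unfolding sqclass_def by (auto intro: exI[of _ 1])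

lemma Jgrp_iff: "A \<in> Jgrp \<longleftrightarrow> (\<exists>g. g \<noteq> 0 \<and> A = sqclass g)"
  unfolding Jgrp_def by auto

lemma jmul_commute: "jmul A B = jmul B A"
  unfolding jmul_def by (auto simp: mult.commute; metis mult.commute)

lemma jmul_assoc: "jmul (jmul A B) C = jmul A (jmul B C)"
  unfolding jmul_def by (auto simp: mult.assoc; metis mult.assoc)

lemma jmul_left_commute: "jmul A (jmul B C) = jmul B (jmul A C)"
  by (metis jmul_assoc jmul_commute)

lemmas jmul_ac = jmul_assoc jmul_commute jmul_left_commute

lemma jone_in_Jgrp [simp]: "jone \<in> Jgrp"
  unfolding jone_def Jgrp_iff by (intro exI[of _ 1]) auto

lemma jmul_in_Jgrp [simp]: "A \<in> Jgrp \<Longrightarrow> B \<in> Jgrp \<Longrightarrow> jmul A B \<in> Jgrp"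
  unfolding Jgrp_iff by (metis jmul_sqclass no_zero_divisors)

lemma jmul_jone_left [simp]: "A \<in> Jgrp \<Longrightarrow> jmul jone A = A"
  unfolding Jgrp_iff jone_def by (auto simp: jmul_sqclass)

lemma jmul_jone_right [simp]: "A \<in> Jgrp \<Longrightarrow> jmul A jone = A"
  using jmul_jone_left jmul_commute by metis

lemma jmul_self [simp]: "A \<in> Jgrp \<Longrightarrow> jmul A A = jone"
  unfolding Jgrp_iff by (auto simp: jmul_sqclass sqclass_square)

lemma jmul_self_left [simp]: "A \<in> Jgrp \<Longrightarrow> B \<in> Jgrp \<Longrightarrow> jmul A (jmul A B) = B"
  by (metis jmul_assoc jmul_self jmul_jone_left)

lemma jmul_eq_jone_iff: "A \<in> Jgrp \<Longrightarrow> B \<in> Jgrp \<Longrightarrow> jmul A B = jone \<longleftrightarrow> A = B"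
  by (metis jmul_self jmul_self_left jmul_jone_right)

lemma jmul_eq_jmul_swap:
  assumes "A \<in> Jgrp" "B \<in> Jgrp" "C \<in> Jgrp" "D \<in> Jgrp" and "jmul A B = jmul C D"
  shows "jmul A C = jmul B D"
proof -
  have "jmul A C = jmul (jmul A B) (jmul B C)" using assms(1-3) by (simp add: jmul_ac)
  also have "\<dots> = jmul (jmul C D) (jmul B C)" using assms(5) by simp
  also have "\<dots> = jmul B D" using assms(2-4) by (simp add: jmul_ac)
  finally show ?thesis .
qed

lemma jsubspace_Jgrp: "jsubspace Jgrp"
  unfolding jsubspace_def by simp

lemma jsubspace_jone: "jsubspace {jone}"
  unfolding jsubspace_def by simp

lemma jsubspaceD:
  assumes "jsubspace V"
  shows "V \<subseteq> Jgrp" "jone \<in> V" "A \<in> V \<Longrightarrow> B \<in> V \<Longrightarrow> jmul A B \<in> V"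
  using assms unfolding jsubspace_def by auto

lemma jsubspace_jmul_set:
  assumes A: "jsubspace A" and B: "jsubspace B"
  shows "jsubspace {jmul a b | a b. a \<in> A \<and> b \<in> B}"
  unfolding jsubspace_def
proof (intro conjI ballI)
  show "{jmul a b | a b. a \<in> A \<and> b \<in> B} \<subseteq> Jgrp"
    using jsubspaceD(1)[OF A] jsubspaceD(1)[OF B] by (blast intro: jmul_in_Jgrp)
  show "jone \<in> {jmul a b | a b. a \<in> A \<and> b \<in> B}"
    using jsubspaceD(2)[OF A] jsubspaceD(2)[OF B] by (intro CollectI exI[of _ jone]) simp
  fix C D assume "C \<in> {jmul a b | a b. a \<in> A \<and> b \<in> B}" "D \<in> {jmul a b | a b. a \<in> A \<and> b \<in> B}"
  then obtain a b a' b' where ab: "a \<in> A" "b \<in> B" "a' \<in> A" "b' \<in> B"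
    and "C = jmul a b" "D = jmul a' b'" by blast
  then have "jmul C D = jmul (jmul a a') (jmul b b')" by (simp only: jmul_ac)
  moreover have "jmul a a' \<in> A" "jmul b b' \<in> B" using ab jsubspaceD(3)[OF A] jsubspaceD(3)[OF B] by blast+
  ultimately show "jmul C D \<in> {jmul a b | a b. a \<in> A \<and> b \<in> B}" by blast
qed

lemma jspan_subset_Jgrp: "S \<subseteq> Jgrp \<Longrightarrow> jspan S \<subseteq> Jgrp"
proof
  fix x assume "x \<in> jspan S" and "S \<subseteq> Jgrp"
  then show "x \<in> Jgrp" by (induction rule: jspan.induct) auto
qed

lemma jspan_jmul:
  assumes S: "S \<subseteq> Jgrp" and x: "x \<in> jspan S" and y: "y \<in> jspan S"
  shows "jmul x y \<in> jspan S"
  using x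
proof (induction rule: jspan.induct)
  case one
  then show ?case using y jspan_subset_Jgrp[OF S] by auto
next
  case (mul s x)
  then show ?case by (simp add: jmul_assoc jspan.mul)
qed

lemma jspan_base: "s \<in> Jgrp \<Longrightarrow> s \<in> S \<Longrightarrow> s \<in> jspan S"
  using jspan.mul[OF _ jspan.one, of s S] by auto

lemma jspan_superset: "S \<subseteq> Jgrp \<Longrightarrow> S \<subseteq> jspan S"
  using jspan_base by blast

lemma jsubspace_jspan: "S \<subseteq> Jgrp \<Longrightarrow> jsubspace (jspan S)"
  unfolding jsubspace_def using jspan_subset_Jgrp jspan.one jspan_jmul by blast

lemma jspan_least: "jsubspace V \<Longrightarrow> S \<subseteq> V \<Longrightarrow> jspan S \<subseteq> V"
proof
  fix x assume "x \<in> jspan S" and "jsubspace V" "S \<subseteq> V"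
  then show "x \<in> V" by (induction rule: jspan.induct) (auto dest: jsubspaceD)
qed

lemma jspan_eq_self: "jsubspace V \<Longrightarrow> jspan V = V"
  using jspan_least[of V V] jspan_base[of _ V] jsubspaceD(1) by blast

lemma jspan_mono: "S \<subseteq> T \<Longrightarrow> jspan S \<subseteq> jspan T"
proof
  fix x assume "x \<in> jspan S" and "S \<subseteq> T"
  then show "x \<in> jspan T" by (induction rule: jspan.induct) (auto intro: jspan.intros)
qed

lemma jspan_empty: "jspan {} = {jone}"
proof -
  have "x = jone" if "x \<in> jspan {}" for x :: "'k::field set"
    using that by (induction rule: jspan.induct) auto
  then show ?thesis using jspan.one by blast
qed

lemma jspan_insert:
  assumes a: "a \<in> Jgrp" and S: "S \<subseteq> Jgrp"
  shows "jspan (insert a S) = jspan S \<union> jmul a ` jspan S"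
proof
  show "jspan (insert a S) \<subseteq> jspan S \<union> jmul a ` jspan S"
  proof
    fix x assume "x \<in> jspan (insert a S)"
    then show "x \<in> jspan S \<union> jmul a ` jspan S"
    proof (induction rule: jspan.induct)
      case one
      then show ?case using jspan.one by blast
    next
      case (mul s x)
      then consider "s = a" | "s \<in> S" by blast
      then show ?case
      proof cases
        case 1
        then show ?thesis
          using mul.IH a jspan_subset_Jgrp[OF S] by auto
      next
        case 2
        then show ?thesis
          using mul.IH jspan.mul[OF 2] by (auto simp: jmul_left_commute)
      qed
    qed
  qed
  show "jspan S \<union> jmul a ` jspan S \<subseteq> jspan (insert a S)"
    using jspan.mul[of a "insert a S"] jspan_mono[of S "insert a S"] by blast
qed

lemma jspan_insert2E:
  assumes a: "a \<in> Jgrp" and b: "b \<in> Jgrp" and S: "S \<subseteq> Jgrp"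
    and m: "m \<in> jspan (insert a (insert b S))"
  obtains e m' where "e \<in> {jone, a, b, jmul a b}" "m' \<in> jspan S" "m = jmul e m'"
proof -
  have bS: "insert b S \<subseteq> Jgrp" using b S by simp
  from m have "m \<in> jspan (insert b S) \<union> jmul a ` jspan (insert b S)"
    unfolding jspan_insert[OF a bS] .
  then show thesis
  proof
    assume "m \<in> jspan (insert b S)"
    then show thesis unfolding jspan_insert[OF b S]
    proof
      assume "m \<in> jspan S"
      then show thesis using that[of jone m] jspan_subset_Jgrp[OF S] by auto
    qed (use that in blast)
  next
    assume "m \<in> jmul a ` jspan (insert b S)"
    then obtain y where y: "y \<in> jspan S \<union> jmul b ` jspan S" "m = jmul a y"
      unfolding jspan_insert[OF b S] by blast
    from y(1) show thesis
    proof
      assume "y \<in> jmul b ` jspan S"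
      then obtain z where "z \<in> jspan S" "y = jmul b z" by blast
      then show thesis using that[of "jmul a b" z] y(2) by (simp add: jmul_assoc)
    qed (use that y(2) in blast)
  qed
qed

lemma jspan_finite_subset: "x \<in> jspan S \<Longrightarrow> \<exists>T. finite T \<and> T \<subseteq> S \<and> x \<in> jspan T"
proof (induction rule: jspan.induct)
  case one
  then show ?case using jspan.one by blast
next
  case (mul s x)
  then obtain T where T: "finite T" "T \<subseteq> S" "x \<in> jspan T" by blast
  then have "jmul s x \<in> jspan (insert s T)"
    using jspan.mul[of s "insert s T"] jspan_mono[of T "insert s T"] by blast
  then show ?case using T mul by (intro exI[of _ "insert s T"]) auto
qed

lemma jindep_subset: "jindep T \<Longrightarrow> S \<subseteq> T \<Longrightarrow> jindep S"
  unfolding jindep_def by (meson Diff_mono jspan_mono subset_refl subsetD)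

lemma jindep_finitary:
  assumes "\<And>T. finite T \<Longrightarrow> T \<subseteq> S \<Longrightarrow> jindep T"
  shows "jindep S"
  unfolding jindep_def
proof (intro ballI notI)
  fix s assume s: "s \<in> S" and "s \<in> jspan (S - {s})"
  then obtain T where T: "finite T" "T \<subseteq> S - {s}" "s \<in> jspan T"
    using jspan_finite_subset by blast
  then have "jindep (insert s T)" using assms[of "insert s T"] s by auto
  moreover have "insert s T - {s} = T" using T by auto
  ultimately show False using T unfolding jindep_def by auto
qed

lemma jindep_insert:
  assumes S: "S \<subseteq> Jgrp" and a: "a \<in> Jgrp" and ind: "jindep S" and a_notin: "a \<notin> jspan S"
  shows "jindep (insert a S)"
  unfolding jindep_def
proof (intro ballI notI)
  fix s assume s: "s \<in> insert a S" and s_span: "s \<in> jspan (insert a S - {s})"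
  have "a \<notin> S" using a_notin jspan_base a by blast
  then show False
  proof (cases "s = a")
    case True
    then show False using s_span a_notin \<open>a \<notin> S\<close> by simp
  next
    case False
    then have "s \<in> S" "insert a S - {s} = insert a (S - {s})" using s by auto
    then have "s \<in> jspan (S - {s}) \<union> jmul a ` jspan (S - {s})"
      using s_span jspan_insert[OF a, of "S - {s}"] S by auto
    moreover have "s \<notin> jspan (S - {s})" using ind \<open>s \<in> S\<close> unfolding jindep_def by blast
    ultimately obtain y where y: "y \<in> jspan (S - {s})" "s = jmul a y" by blast
    have yJ: "y \<in> Jgrp" using y(1) jspan_subset_Jgrp[of "S - {s}"] S by auto
    have "y \<in> jspan S" "s \<in> jspan S"
      using y(1) jspan_mono[of "S - {s}" S] jspan_base[of s S] \<open>s \<in> S\<close> S by auto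
    then have "jmul s y \<in> jspan S" using jspan_jmul[OF S] by blast
    moreover have "jmul s y = a"
      using y(2) a yJ by (simp add: jmul_ac)
    ultimately show False using a_notin by simp
  qed
qed

lemma jsubspace_Union_chain:
  assumes "\<C> \<noteq> {}" and "\<And>W. W \<in> \<C> \<Longrightarrow> jsubspace W"
    and "\<And>W W'. W \<in> \<C> \<Longrightarrow> W' \<in> \<C> \<Longrightarrow> W \<subseteq> W' \<or> W' \<subseteq> W"
  shows "jsubspace (\<Union>\<C>)"
  unfolding jsubspace_def
proof (intro conjI ballI)
  show "\<Union>\<C> \<subseteq> Jgrp" "jone \<in> \<Union>\<C>" using assms(1,2) jsubspaceD by blast+
  fix A B assume "A \<in> \<Union>\<C>" "B \<in> \<Union>\<C>"
  then obtain W W' where W: "W \<in> \<C>" "W' \<in> \<C>" "A \<in> W" "B \<in> W'" by blast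
  then consider "A \<in> W'" "B \<in> W'" | "A \<in> W" "B \<in> W" using assms(3)[of W W'] by blast
  then show "jmul A B \<in> \<Union>\<C>"
    by cases (use W jsubspaceD(3)[OF assms(2)[of W]] jsubspaceD(3)[OF assms(2)[of W']] in blast)+
qed

lemma jsubspace_complement:
  assumes U: "jsubspace U" and V: "jsubspace V" and "U \<subseteq> V"
  obtains W where "jsubspace W" "W \<subseteq> V" "U \<inter> W = {jone}"
    "\<And>v. v \<in> V \<Longrightarrow> \<exists>u\<in>U. \<exists>w\<in>W. v = jmul u w"
proof -
  define \<A> where "\<A> = {W. jsubspace W \<and> W \<subseteq> V \<and> U \<inter> W = {jone}}"
  have "\<exists>M\<in>\<A>. \<forall>W\<in>\<A>. M \<subseteq> W \<longrightarrow> W = M"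
  proof (rule subset_Zorn_nonempty)
    show "\<A> \<noteq> {}" unfolding \<A>_def using jsubspace_jone U V jsubspaceD(2) by blast
  next
    fix \<C> assume ne: "\<C> \<noteq> {}" and chain: "subset.chain \<A> \<C>"
    then have \<C>: "\<And>W. W \<in> \<C> \<Longrightarrow> jsubspace W \<and> W \<subseteq> V \<and> U \<inter> W = {jone}"
      and tot: "\<And>W W'. W \<in> \<C> \<Longrightarrow> W' \<in> \<C> \<Longrightarrow> W \<subseteq> W' \<or> W' \<subseteq> W"
      unfolding subset_chain_def \<A>_def by auto
    have "jsubspace (\<Union>\<C>)" using jsubspace_Union_chain[OF ne] \<C> tot by blast
    moreover have "\<Union>\<C> \<subseteq> V" "U \<inter> \<Union>\<C> = {jone}" using \<C> ne by blast+
    ultimately show "\<Union>\<C> \<in> \<A>" unfolding \<A>_def by blast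
  qed
  then obtain W where "W \<in> \<A>" and max: "\<And>W'. W' \<in> \<A> \<Longrightarrow> W \<subseteq> W' \<Longrightarrow> W' = W"
    by blast
  then have W: "jsubspace W" "W \<subseteq> V" "U \<inter> W = {jone}" unfolding \<A>_def by auto
  have WJ: "W \<subseteq> Jgrp" and VJ: "V \<subseteq> Jgrp" using W(1) V jsubspaceD(1) by auto
  have "\<exists>u\<in>U. \<exists>w\<in>W. v = jmul u w" if v: "v \<in> V" for v
  proof (rule ccontr)
    assume v_notin: "\<not> (\<exists>u\<in>U. \<exists>w\<in>W. v = jmul u w)"
    have vJ: "v \<in> Jgrp" using v VJ by auto
    let ?W' = "jspan (insert v W)"
    have W'_eq: "?W' = W \<union> jmul v ` W"
      using jspan_insert[OF vJ WJ] jspan_eq_self[OF W(1)] by simp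
    have "U \<inter> jmul v ` W \<subseteq> {jone}"
    proof
      fix x assume "x \<in> U \<inter> jmul v ` W"
      then obtain w where "x \<in> U" "w \<in> W" "x = jmul v w" by blast
      have "w \<in> Jgrp" using \<open>w \<in> W\<close> WJ by blast
      then have "v = jmul x w" using vJ \<open>x = jmul v w\<close> by (simp add: jmul_assoc)
      then have "\<exists>u\<in>U. \<exists>w\<in>W. v = jmul u w" using \<open>x \<in> U\<close> \<open>w \<in> W\<close> by blast
      then show "x \<in> {jone}" using v_notin by contradiction
    qed
    then have "U \<inter> ?W' = {jone}" unfolding W'_eq using W(3) by blast
    moreover have "jsubspace ?W'" using jsubspace_jspan[of "insert v W"] WJ vJ by simp
    moreover have "?W' \<subseteq> V" using jspan_least[OF V, of "insert v W"] v W(2) by simp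
    ultimately have "?W' \<in> \<A>" unfolding \<A>_def by blast
    then have "?W' = W" using max W'_eq by blast
    then have "v \<in> W" using jspan_base[OF vJ, of "insert v W"] by auto
    moreover have "jone \<in> U" "v = jmul jone v" using jsubspaceD(2)[OF U] vJ by simp_all
    ultimately have "\<exists>u\<in>U. \<exists>w\<in>W. v = jmul u w" by blast
    then show False using v_notin by contradiction
  qed
  with W show thesis by (rule that)
qed

lemma jdirect3I:
  assumes X: "jsubspace X" and Y: "jsubspace Y" and Z: "jsubspace Z"
    and exist: "\<And>A. A \<in> V \<Longrightarrow> \<exists>x\<in>X. \<exists>y\<in>Y. \<exists>z\<in>Z. A = jmul x (jmul y z)"
    and indep: "\<And>x y z. x \<in> X \<Longrightarrow> y \<in> Y \<Longrightarrow> z \<in> Z \<Longrightarrow> jmul x (jmul y z) = jone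
      \<Longrightarrow> x = jone \<and> y = jone \<and> z = jone"
  shows "jdirect3 V X Y Z"
  unfolding jdirect3_def
proof
  fix A assume "A \<in> V"
  then obtain x y z where xyz: "x \<in> X" "y \<in> Y" "z \<in> Z" and A: "A = jmul x (jmul y z)"
    using exist by blast
  show "\<exists>!(x, y, z). x \<in> X \<and> y \<in> Y \<and> z \<in> Z \<and> A = jmul x (jmul y z)"
  proof (rule ex1I[of _ "(x, y, z)"])
    show "case (x, y, z) of (x, y, z) \<Rightarrow> x \<in> X \<and> y \<in> Y \<and> z \<in> Z \<and> A = jmul x (jmul y z)"
      using xyz A by simp
  next
    fix p assume "case p of (x, y, z) \<Rightarrow> x \<in> X \<and> y \<in> Y \<and> z \<in> Z \<and> A = jmul x (jmul y z)"
    then obtain x' y' z' where p: "p = (x', y', z')" and xyz': "x' \<in> X" "y' \<in> Y" "z' \<in> Z"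
      and A': "A = jmul x' (jmul y' z')" by (cases p) auto
    have J: "x \<in> Jgrp" "y \<in> Jgrp" "z \<in> Jgrp" "x' \<in> Jgrp" "y' \<in> Jgrp" "z' \<in> Jgrp"
      using xyz xyz' jsubspaceD(1)[OF X] jsubspaceD(1)[OF Y] jsubspaceD(1)[OF Z] by blast+
    have "jmul (jmul x x') (jmul (jmul y y') (jmul z z'))
        = jmul (jmul x (jmul y z)) (jmul x' (jmul y' z'))" by (simp only: jmul_ac)
    also have "\<dots> = jmul A A" by (simp only: A[symmetric] A'[symmetric])
    also have "\<dots> = jone" using J unfolding A by simp
    finally have "jmul x x' = jone \<and> jmul y y' = jone \<and> jmul z z' = jone"
      by (rule indep[OF jsubspaceD(3)[OF X xyz(1) xyz'(1)] jsubspaceD(3)[OF Y xyz(2) xyz'(2)]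
            jsubspaceD(3)[OF Z xyz(3) xyz'(3)]])
    then show "p = (x, y, z)" using p J by (simp add: jmul_eq_jone_iff)
  qed
qed

section \<open>The Galois action and the norm\<close>

locale quadratic_galois =
  fixes \<sigma> :: "'k::field \<Rightarrow> 'k"
  assumes aut: "qaut \<sigma>"
begin

lemma sigma_add: "\<sigma> (x + y) = \<sigma> x + \<sigma> y"
  using aut by (simp add: qaut_def)

lemma sigma_mult: "\<sigma> (x * y) = \<sigma> x * \<sigma> y"
  using aut by (simp add: qaut_def)

lemma sigma_one [simp]: "\<sigma> 1 = 1"
  using aut by (simp add: qaut_def)

lemma sigma_sigma [simp]: "\<sigma> (\<sigma> x) = x"
  using aut by (simp add: qaut_def)

lemma sigma_not_id: "\<exists>t. \<sigma> t \<noteq> t"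
  using aut unfolding qaut_def by (metis eq_id_iff)

lemma sigma_zero [simp]: "\<sigma> 0 = 0"
  by (metis add_cancel_right_right sigma_add add_0)

lemma sigma_minus: "\<sigma> (- x) = - \<sigma> x"
  using sigma_add[of x "- x"] by (simp add: eq_neg_iff_add_eq_0 add.commute)

lemma sigma_eq_0_iff [simp]: "\<sigma> x = 0 \<longleftrightarrow> x = 0"
  by (metis sigma_sigma sigma_zero)

lemma sigma_power2: "\<sigma> (x\<^sup>2) = (\<sigma> x)\<^sup>2"
  by (simp add: power2_eq_square sigma_mult)

lemma jsig_sqclass: "jsig \<sigma> (sqclass g) = sqclass (\<sigma> g)"
proof (rule set_eqI, rule iffI)
  fix x assume "x \<in> jsig \<sigma> (sqclass g)"
  then obtain s where "s \<noteq> 0" "x = \<sigma> (g * s\<^sup>2)" unfolding jsig_def sqclass_def by blast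
  then show "x \<in> sqclass (\<sigma> g)"
    unfolding sqclass_def by (intro CollectI exI[of _ "\<sigma> s"]) (simp add: sigma_mult sigma_power2)
next
  fix x assume "x \<in> sqclass (\<sigma> g)"
  then obtain t where "t \<noteq> 0" "x = \<sigma> g * t\<^sup>2" unfolding sqclass_def by blast
  then show "x \<in> jsig \<sigma> (sqclass g)"
    unfolding jsig_def sqclass_def
    by (intro image_eqI[of _ _ "g * (\<sigma> t)\<^sup>2"]) (auto simp: sigma_mult sigma_power2)
qed

lemma jsig_in_Jgrp [simp]: "A \<in> Jgrp \<Longrightarrow> jsig \<sigma> A \<in> Jgrp"
  unfolding Jgrp_iff by (metis jsig_sqclass sigma_eq_0_iff)

lemma jsig_jsig [simp]: "jsig \<sigma> (jsig \<sigma> A) = A"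
  unfolding jsig_def by (simp add: image_image)

lemma jsig_eq_iff [simp]: "jsig \<sigma> A = jsig \<sigma> B \<longleftrightarrow> A = B"
  by (metis jsig_jsig)

lemma jsig_jmul: "jsig \<sigma> (jmul A B) = jmul (jsig \<sigma> A) (jsig \<sigma> B)"
proof (rule set_eqI, rule iffI)
  fix z assume "z \<in> jsig \<sigma> (jmul A B)"
  then obtain x y where "x \<in> A" "y \<in> B" "z = \<sigma> (x * y)" unfolding jsig_def jmul_def by blast
  then show "z \<in> jmul (jsig \<sigma> A) (jsig \<sigma> B)" unfolding jsig_def jmul_def by (auto simp: sigma_mult)
next
  fix z assume "z \<in> jmul (jsig \<sigma> A) (jsig \<sigma> B)"
  then obtain x y where "x \<in> A" "y \<in> B" "z = \<sigma> x * \<sigma> y" unfolding jsig_def jmul_def by blast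
  then show "z \<in> jsig \<sigma> (jmul A B)" unfolding jsig_def jmul_def by (auto simp: sigma_mult[symmetric])
qed

lemma jsig_jone [simp]: "jsig \<sigma> jone = jone"
  unfolding jone_def by (simp add: jsig_sqclass)

lemma jsig_jspan:
  assumes "x \<in> jspan S"
  shows "jsig \<sigma> x \<in> jspan (jsig \<sigma> ` S)"
  using assms by (induction rule: jspan.induct) (simp_all add: jsig_jmul jspan.intros)

lemma jsubmodule_jspan:
  assumes "S \<subseteq> Jgrp" and "jsig \<sigma> ` S \<subseteq> S"
  shows "jsubmodule \<sigma> (jspan S)"
proof -
  have "jsig \<sigma> x \<in> jspan S" if "x \<in> jspan S" for x
    using jsig_jspan[OF that] jspan_mono[OF assms(2)] by blast
  then show ?thesis unfolding jsubmodule_def using jsubspace_jspan[OF assms(1)] by blast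
qed

lemma jsubspace_jfixed: "jsubspace V \<Longrightarrow> jsubspace (jfixed \<sigma> V)"
  unfolding jsubspace_def jfixed_def by (auto simp: jsig_jmul)

lemma jsubmodule_if_fixed: "jsubspace X \<Longrightarrow> X \<subseteq> jfixed \<sigma> Jgrp \<Longrightarrow> jsubmodule \<sigma> X"
  unfolding jsubmodule_def jfixed_def by auto

lemma jnorm_in_Jgrp [simp]: "A \<in> Jgrp \<Longrightarrow> jnorm \<sigma> A \<in> Jgrp"
  unfolding jnorm_def by simp

lemma jnorm_jmul: "jnorm \<sigma> (jmul A B) = jmul (jnorm \<sigma> A) (jnorm \<sigma> B)"
  unfolding jnorm_def by (simp add: jsig_jmul jmul_ac)

lemma jsig_jnorm [simp]: "jsig \<sigma> (jnorm \<sigma> A) = jnorm \<sigma> A"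
  unfolding jnorm_def by (simp add: jsig_jmul jmul_commute)

lemma jnorm_jone [simp]: "jnorm \<sigma> jone = jone"
  unfolding jnorm_def by simp

lemma jnorm_eq_jone_iff: "A \<in> Jgrp \<Longrightarrow> jnorm \<sigma> A = jone \<longleftrightarrow> jsig \<sigma> A = A"
  unfolding jnorm_def using jmul_eq_jone_iff[of A "jsig \<sigma> A"] by auto

lemma jnorm_jsig [simp]: "jnorm \<sigma> (jsig \<sigma> A) = jnorm \<sigma> A"
  unfolding jnorm_def jsig_jsig by (rule jmul_commute)

lemma jnorm_jnorm [simp]: "A \<in> Jgrp \<Longrightarrow> jnorm \<sigma> (jnorm \<sigma> A) = jone"
  using jnorm_eq_jone_iff[of "jnorm \<sigma> A"] by simp

lemma jnorm_sqclass: "jnorm \<sigma> (sqclass g) = sqclass (g * \<sigma> g)"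
  unfolding jnorm_def by (simp add: jsig_sqclass jmul_sqclass)

lemma jnorm_eq_if_jmul_fixed:
  assumes "e \<in> Jgrp" "m \<in> Jgrp" and "jsig \<sigma> (jmul e m) = jmul e m"
  shows "jnorm \<sigma> e = jnorm \<sigma> m"
  unfolding jnorm_def
proof (rule jmul_eq_jmul_swap)
  show "jmul e m = jmul (jsig \<sigma> e) (jsig \<sigma> m)" using assms(3) by (simp add: jsig_jmul)
qed (use assms(1,2) in simp_all)

lemma jsubmodule_jnorm: "jsubmodule \<sigma> V \<Longrightarrow> A \<in> V \<Longrightarrow> jnorm \<sigma> A \<in> V"
  unfolding jsubmodule_def jsubspace_def jnorm_def by blast

lemma jnorm_in_jspan: "a \<in> Jgrp \<Longrightarrow> a \<in> S \<Longrightarrow> jsig \<sigma> a \<in> S \<Longrightarrow> jnorm \<sigma> a \<in> jspan S"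
  using jspan.mul[of a S, OF _ jspan.mul[of "jsig \<sigma> a" S, OF _ jspan.one]]
  by (simp add: jnorm_def)

lemma jsubspace_image_jnorm:
  assumes Y: "jsubspace Y"
  shows "jsubspace (jnorm \<sigma> ` Y)"
  unfolding jsubspace_def
proof (intro conjI ballI)
  show "jnorm \<sigma> ` Y \<subseteq> Jgrp" using jsubspaceD(1)[OF Y] by auto
  show "jone \<in> jnorm \<sigma> ` Y" using jsubspaceD(2)[OF Y] jnorm_jone by (metis image_eqI)
  fix A B assume "A \<in> jnorm \<sigma> ` Y" "B \<in> jnorm \<sigma> ` Y"
  then obtain a b where "a \<in> Y" "b \<in> Y" "A = jnorm \<sigma> a" "B = jnorm \<sigma> b" by blast
  then show "jmul A B \<in> jnorm \<sigma> ` Y"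
    using jnorm_jmul[of a b] jsubspaceD(3)[OF Y] by (metis image_eqI)
qed

lemma jsubspace_NJ: "jsubspace (NJ \<sigma>)"
  unfolding NJ_def by (rule jsubspace_image_jnorm[OF jsubspace_Jgrp])

lemma NJ_subset_jfixed: "NJ \<sigma> \<subseteq> jfixed \<sigma> Jgrp"
  unfolding NJ_def jfixed_def by auto

section \<open>Free families\<close>

abbreviation orbits :: "'k set set \<Rightarrow> 'k set set" where
  "orbits B \<equiv> B \<union> jsig \<sigma> ` B"

definition free_family :: "'k set set \<Rightarrow> bool" where
  "free_family B \<longleftrightarrow> B \<subseteq> Jgrp \<and> B \<inter> jsig \<sigma> ` B = {} \<and> jindep (orbits B)"

lemma orbits_subset_Jgrp: "B \<subseteq> Jgrp \<Longrightarrow> orbits B \<subseteq> Jgrp"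
  by auto

lemma jsubmodule_jspan_orbits: "B \<subseteq> Jgrp \<Longrightarrow> jsubmodule \<sigma> (jspan (orbits B))"
  by (rule jsubmodule_jspan) auto

lemma free_family_jfree_basis: "free_family B \<Longrightarrow> jfree_basis \<sigma> B (jspan (orbits B))"
  unfolding free_family_def jfree_basis_def jbasis_def
  using jspan_superset[OF orbits_subset_Jgrp] by blast

lemma jfree_jspan_orbits: "free_family B \<Longrightarrow> jfree \<sigma> (jspan (orbits B))"
  unfolding jfree_def using free_family_jfree_basis jsubmodule_jspan_orbits free_family_def by blast

lemma jfree_basisD: "jfree_basis \<sigma> B V \<Longrightarrow> V \<subseteq> Jgrp \<Longrightarrow> free_family B \<and> jspan (orbits B) = V"
  unfolding jfree_basis_def jbasis_def free_family_def by auto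

lemma free_family_subset:
  assumes "free_family B" and "B' \<subseteq> B"
  shows "free_family B'"
proof -
  from assms(1) have BJ: "B \<subseteq> Jgrp" and disj: "B \<inter> jsig \<sigma> ` B = {}"
    and ind: "jindep (orbits B)"
    unfolding free_family_def by auto
  have "orbits B' \<subseteq> orbits B" using assms(2) by auto
  with ind have "jindep (orbits B')" by (rule jindep_subset)
  moreover have "B' \<subseteq> Jgrp" "B' \<inter> jsig \<sigma> ` B' = {}" using assms(2) BJ disj by auto
  ultimately show ?thesis unfolding free_family_def by blast
qed

lemma finite_subset_orbits:
  assumes "finite T0" and "T0 \<subseteq> orbits B"
  obtains T where "finite T" "T \<subseteq> B" "T0 \<subseteq> orbits T"
proof -
  let ?T = "(T0 \<inter> B) \<union> jsig \<sigma> ` (T0 - B)"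
  have "finite ?T" using assms(1) by simp
  moreover have "?T \<subseteq> B" using assms(2) by auto
  moreover have "T0 \<subseteq> orbits ?T"
  proof
    fix c assume "c \<in> T0"
    then have "c \<in> ?T \<or> jsig \<sigma> c \<in> ?T" by blast
    then show "c \<in> orbits ?T" by (metis UnI1 UnI2 image_eqI jsig_jsig)
  qed
  ultimately show thesis by (rule that)
qed

lemma free_family_finitary:
  assumes BJ: "B \<subseteq> Jgrp" and fin: "\<And>T. finite T \<Longrightarrow> T \<subseteq> B \<Longrightarrow> free_family T"
  shows "free_family B"
proof -
  have "B \<inter> jsig \<sigma> ` B = {}"
  proof (rule ccontr)
    assume "B \<inter> jsig \<sigma> ` B \<noteq> {}"
    then obtain x y where "x \<in> B" "y \<in> B" "x = jsig \<sigma> y" by blast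
    then have "{x, y} \<inter> jsig \<sigma> ` {x, y} \<noteq> {}" by blast
    moreover have "free_family {x, y}" using fin \<open>x \<in> B\<close> \<open>y \<in> B\<close> by simp
    ultimately show False unfolding free_family_def by blast
  qed
  moreover have "jindep (orbits B)"
  proof (rule jindep_finitary)
    fix T0 assume "finite T0" "T0 \<subseteq> orbits B"
    then obtain T where T: "finite T" "T \<subseteq> B" "T0 \<subseteq> orbits T" by (rule finite_subset_orbits)
    have "jindep (orbits T)" using fin[OF T(1,2)] unfolding free_family_def by blast
    then show "jindep T0" using T(3) by (rule jindep_subset)
  qed
  ultimately show ?thesis using BJ unfolding free_family_def by blast
qed

lemma ex_maximal_free_family:
  "\<exists>B. free_family B \<and> (\<forall>B'. free_family B' \<longrightarrow> B \<subseteq> B' \<longrightarrow> B' = B)"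
proof -
  have "\<exists>M\<in>{B. free_family B}. \<forall>B'\<in>{B. free_family B}. M \<subseteq> B' \<longrightarrow> B' = M"
  proof (rule subset_Zorn_nonempty)
    have "free_family {}" unfolding free_family_def jindep_def by simp
    then show "{B. free_family B} \<noteq> {}" by blast
  next
    fix \<C> assume ne: "\<C> \<noteq> {}" and chain: "subset.chain {B. free_family B} \<C>"
    show "\<Union>\<C> \<in> {B. free_family B}"
    proof (rule CollectI, rule free_family_finitary)
      show "\<Union>\<C> \<subseteq> Jgrp" using chain unfolding subset_chain_def free_family_def by blast
    next
      fix T assume "finite T" "T \<subseteq> \<Union>\<C>"
      then obtain X where "X \<in> \<C>" "T \<subseteq> X" by (rule finite_subset_Union_chain[OF _ _ ne chain])
      have "free_family X" using chain \<open>X \<in> \<C>\<close> unfolding subset_chain_def by blast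
      then show "free_family T" using \<open>T \<subseteq> X\<close> by (rule free_family_subset)
    qed
  qed
  then show ?thesis by blast
qed

lemma free_family_insert:
  assumes B: "free_family B" and x: "x \<in> Jgrp" and norm_notin: "jnorm \<sigma> x \<notin> jspan (orbits B)"
  shows "free_family (insert x B)"
proof -
  let ?S = "orbits B"
  let ?M = "jspan ?S"
  have BJ: "B \<subseteq> Jgrp" and disj: "B \<inter> jsig \<sigma> ` B = {}" and ind: "jindep ?S"
    using B unfolding free_family_def by auto
  have SJ: "?S \<subseteq> Jgrp" using BJ by auto
  have M_jsig: "jsig \<sigma> y \<in> ?M" if "y \<in> ?M" for y
    using jsubmodule_jspan_orbits[OF BJ] that unfolding jsubmodule_def by blast
  have x_notin: "x \<notin> ?M"
  proof
    assume "x \<in> ?M"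
    then have "jnorm \<sigma> x \<in> ?M" unfolding jnorm_def using M_jsig jspan_jmul[OF SJ] by blast
    then show False using norm_notin by contradiction
  qed
  have sx_notin: "jsig \<sigma> x \<notin> ?M" using x_notin M_jsig[of "jsig \<sigma> x"] by auto
  have "x \<noteq> jsig \<sigma> x"
  proof
    assume "x = jsig \<sigma> x"
    then have "jnorm \<sigma> x = jone" using jnorm_eq_jone_iff[OF x] by simp
    then show False using norm_notin jspan.one by metis
  qed
  moreover have "x \<notin> ?S" "jsig \<sigma> x \<notin> ?S"
    using x_notin sx_notin SJ jspan_base[of _ ?S] by auto
  ultimately have "insert x B \<inter> jsig \<sigma> ` insert x B = {}" using disj by auto
  moreover have "jindep (insert (jsig \<sigma> x) (insert x ?S))"
  proof (rule jindep_insert)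
    show "jindep (insert x ?S)" by (rule jindep_insert[OF SJ x ind x_notin])
    show "jsig \<sigma> x \<notin> jspan (insert x ?S)"
    proof
      assume "jsig \<sigma> x \<in> jspan (insert x ?S)"
      then have "jsig \<sigma> x \<in> jmul x ` ?M" using jspan_insert[OF x SJ] sx_notin by blast
      then obtain y where y: "y \<in> ?M" "jsig \<sigma> x = jmul x y" by blast
      then have "jnorm \<sigma> x = y" unfolding jnorm_def using x jspan_subset_Jgrp[OF SJ] by auto
      then show False using norm_notin y(1) by simp
    qed
  qed (use SJ x in auto)
  moreover have "orbits (insert x B) = insert (jsig \<sigma> x) (insert x ?S)" by auto
  ultimately show ?thesis using BJ x unfolding free_family_def by simp
qed

lemma jnorm_image_remove_subset:
  assumes B: "free_family B" and b: "b \<in> B"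
  shows "jnorm \<sigma> ` (B - {b}) \<subseteq> jspan (orbits B - {b, jsig \<sigma> b})"
proof
  fix c assume "c \<in> jnorm \<sigma> ` (B - {b})"
  then obtain b' where b': "b' \<in> B" "b' \<noteq> b" "c = jnorm \<sigma> b'" by blast
  have "b' \<in> Jgrp" "b' \<noteq> jsig \<sigma> b" "jsig \<sigma> b' \<noteq> b"
    using B b b'(1) unfolding free_family_def by auto
  moreover have "jsig \<sigma> b' \<noteq> jsig \<sigma> b" using b'(2) by simp
  ultimately show "c \<in> jspan (orbits B - {b, jsig \<sigma> b})"
    using jnorm_in_jspan[of b' "orbits B - {b, jsig \<sigma> b}"] b' by simp
qed

lemma free_family_jnorm_notin:
  assumes B: "free_family B" and b: "b \<in> B"
  shows "jnorm \<sigma> b \<notin> jspan (orbits B - {b, jsig \<sigma> b})"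
proof
  let ?R = "orbits B - {b}"
  have RJ: "?R \<subseteq> Jgrp" and bJ: "b \<in> Jgrp" and "jsig \<sigma> b \<noteq> b"
    using B b unfolding free_family_def by auto
  assume "jnorm \<sigma> b \<in> jspan (orbits B - {b, jsig \<sigma> b})"
  moreover have "jspan (orbits B - {b, jsig \<sigma> b}) \<subseteq> jspan ?R" by (rule jspan_mono) blast
  ultimately have norm_in: "jnorm \<sigma> b \<in> jspan ?R" by blast
  have "jsig \<sigma> b \<in> jspan ?R" using bJ b \<open>jsig \<sigma> b \<noteq> b\<close> by (intro jspan_base) auto
  then have "jmul (jsig \<sigma> b) (jnorm \<sigma> b) \<in> jspan ?R" using norm_in by (rule jspan_jmul[OF RJ])
  moreover have "jmul (jsig \<sigma> b) (jnorm \<sigma> b) = b" unfolding jnorm_def using bJ by (simp add: jmul_ac)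
  ultimately have "b \<in> jspan ?R" by simp
  then show False using B b unfolding free_family_def jindep_def by blast
qed

lemma free_family_inj_on_jnorm:
  assumes B: "free_family B"
  shows "inj_on (jnorm \<sigma>) B"
proof (rule inj_onI, rule ccontr)
  fix b b' assume "b \<in> B" "b' \<in> B" "jnorm \<sigma> b = jnorm \<sigma> b'" "b \<noteq> b'"
  then have "jnorm \<sigma> b \<in> jnorm \<sigma> ` (B - {b})" by auto
  then show False
    using jnorm_image_remove_subset[OF B \<open>b \<in> B\<close>] free_family_jnorm_notin[OF B \<open>b \<in> B\<close>] by blast
qed

lemma free_family_jindep_jnorm:
  assumes B: "free_family B"
  shows "jindep (jnorm \<sigma> ` B)"
  unfolding jindep_def
proof (intro ballI notI)
  fix c assume "c \<in> jnorm \<sigma> ` B" and c_span: "c \<in> jspan (jnorm \<sigma> ` B - {c})"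
  then obtain b where b: "b \<in> B" "c = jnorm \<sigma> b" by blast
  let ?R = "orbits B - {b, jsig \<sigma> b}"
  have RJ: "?R \<subseteq> Jgrp" using B unfolding free_family_def by auto
  have "jnorm \<sigma> ` B - {c} \<subseteq> jnorm \<sigma> ` (B - {b})" using b by blast
  also have "\<dots> \<subseteq> jspan ?R" by (rule jnorm_image_remove_subset[OF B b(1)])
  finally have "jspan (jnorm \<sigma> ` B - {c}) \<subseteq> jspan ?R"
    by (rule jspan_least[OF jsubspace_jspan[OF RJ]])
  then show False using c_span b free_family_jnorm_notin[OF B b(1)] by blast
qed

lemma jnorm_notin_jspan_orbits:
  assumes B: "free_family B" and "b \<in> B" "T \<subseteq> B" "b \<notin> T"
  shows "jnorm \<sigma> b \<notin> jspan (orbits T)"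
proof
  assume "jnorm \<sigma> b \<in> jspan (orbits T)"
  moreover have "orbits T \<subseteq> orbits B - {b, jsig \<sigma> b}" using assms unfolding free_family_def by auto
  ultimately have "jnorm \<sigma> b \<in> jspan (orbits B - {b, jsig \<sigma> b})"
    using jspan_mono[of "orbits T" "orbits B - {b, jsig \<sigma> b}"] by blast
  then show False using free_family_jnorm_notin[OF B \<open>b \<in> B\<close>] by contradiction
qed

lemma free_family_jfixed_finite:
  assumes B: "free_family B" and "finite T" "T \<subseteq> B"
    and "m \<in> jspan (orbits T)" "jsig \<sigma> m = m"
  shows "m \<in> jspan (jnorm \<sigma> ` T)"
  using assms(2-5)
proof (induction T arbitrary: m rule: finite_induct)
  case empty
  then show ?case by simp
next
  case (insert b T)
  let ?S = "orbits T"
  have BJ: "B \<subseteq> Jgrp" using B unfolding free_family_def by blast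
  have bJ: "b \<in> Jgrp" and SJ: "?S \<subseteq> Jgrp" using insert.prems(1) BJ by auto
  have "orbits (insert b T) = insert b (insert (jsig \<sigma> b) ?S)" by auto
  then have "m \<in> jspan (insert b (insert (jsig \<sigma> b) ?S))" using insert.prems(2) by simp
  then obtain e m' where e: "e \<in> {jone, b, jsig \<sigma> b, jmul b (jsig \<sigma> b)}"
    and m': "m' \<in> jspan ?S" and m_eq: "m = jmul e m'"
    by (rule jspan_insert2E[OF bJ jsig_in_Jgrp[OF bJ] SJ])
  have eJ: "e \<in> Jgrp" using e bJ by auto
  have m'J: "m' \<in> Jgrp" using m' jspan_subset_Jgrp[OF SJ] by blast
  have norm_eq: "jnorm \<sigma> e = jnorm \<sigma> m'"
    using eJ m'J insert.prems(3) unfolding m_eq by (rule jnorm_eq_if_jmul_fixed)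
  \<comment> \<open>\<open>e = b\<close> or \<open>e = \<sigma> b\<close> would put \<open>N b = N m'\<close> into the span of the other orbits\<close>
  consider (orbit) "e = b \<or> e = jsig \<sigma> b" | (norm) "e = jone \<or> e = jnorm \<sigma> b"
    using e unfolding jnorm_def by blast
  then show ?case
  proof cases
    case orbit
    then have "jnorm \<sigma> b = jnorm \<sigma> e" by auto
    also have "\<dots> = jnorm \<sigma> m'" by (rule norm_eq)
    also have "\<dots> \<in> jspan ?S"
      using jsubmodule_jnorm[OF jsubmodule_jspan_orbits m'] insert.prems(1) BJ by blast
    finally have "jnorm \<sigma> b \<in> jspan ?S" .
    moreover have "b \<in> B" "T \<subseteq> B" using insert.prems(1) by simp_all
    ultimately show ?thesis using jnorm_notin_jspan_orbits[OF B _ _ insert.hyps(2)] by blast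
  next
    case norm
    then have "jnorm \<sigma> e = jone" using bJ by auto
    then have "jsig \<sigma> m' = m'" using norm_eq jnorm_eq_jone_iff[OF m'J] by simp
    then have "m' \<in> jspan (jnorm \<sigma> ` T)" using insert.IH[OF _ m'] insert.prems(1) by simp
    moreover have "jspan (jnorm \<sigma> ` T) \<subseteq> jspan (jnorm \<sigma> ` insert b T)" by (rule jspan_mono) blast
    ultimately have m'_in: "m' \<in> jspan (jnorm \<sigma> ` insert b T)" by blast
    have "e \<in> jspan (jnorm \<sigma> ` insert b T)" using norm bJ by (auto intro: jspan.one jspan_base)
    moreover have "jnorm \<sigma> ` insert b T \<subseteq> Jgrp" using insert.prems(1) BJ by auto
    ultimately show ?thesis unfolding m_eq using m'_in by (intro jspan_jmul)
  qed
qed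

lemma free_family_jfixed:
  assumes B: "free_family B" and m: "m \<in> jspan (orbits B)" and fixed: "jsig \<sigma> m = m"
  shows "m \<in> jspan (jnorm \<sigma> ` B)"
proof -
  obtain T0 where "finite T0" "T0 \<subseteq> orbits B" "m \<in> jspan T0"
    using jspan_finite_subset[OF m] by blast
  moreover obtain T where T: "finite T" "T \<subseteq> B" "T0 \<subseteq> orbits T"
    using \<open>finite T0\<close> \<open>T0 \<subseteq> orbits B\<close> by (rule finite_subset_orbits)
  ultimately have "m \<in> jspan (orbits T)" using jspan_mono[OF T(3)] by blast
  then have "m \<in> jspan (jnorm \<sigma> ` T)" using free_family_jfixed_finite[OF B T(1,2) _ fixed] by blast
  moreover have "jspan (jnorm \<sigma> ` T) \<subseteq> jspan (jnorm \<sigma> ` B)" using T(2) by (intro jspan_mono image_mono)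
  ultimately show ?thesis by blast
qed

lemma NJ_subset_jspan_orbits:
  assumes B: "free_family B"
    and saturated: "\<And>A. A \<in> Jgrp \<Longrightarrow> free_family (insert A B) \<Longrightarrow> A \<in> jspan (orbits B)"
  shows "NJ \<sigma> \<subseteq> jspan (orbits B)"
proof
  fix n assume "n \<in> NJ \<sigma>"
  then obtain A where A: "A \<in> Jgrp" "n = jnorm \<sigma> A" unfolding NJ_def by blast
  have M: "jsubmodule \<sigma> (jspan (orbits B))"
    using B jsubmodule_jspan_orbits unfolding free_family_def by blast
  show "n \<in> jspan (orbits B)"
  proof (rule ccontr)
    assume "n \<notin> jspan (orbits B)"
    then have "free_family (insert A B)" using free_family_insert[OF B A(1)] A(2) by blast
    then have "A \<in> jspan (orbits B)" using saturated A(1) by blast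
    then have "n \<in> jspan (orbits B)" unfolding A(2) by (rule jsubmodule_jnorm[OF M])
    then show False using \<open>n \<notin> jspan (orbits B)\<close> by contradiction
  qed
qed

lemma jbasis_jnorm_image:
  assumes B: "free_family B" and NJ: "NJ \<sigma> \<subseteq> jspan (orbits B)"
  shows "jbasis (jnorm \<sigma> ` B) (NJ \<sigma>)"
proof -
  have sub: "jnorm \<sigma> ` B \<subseteq> NJ \<sigma>" using B unfolding free_family_def NJ_def by blast
  have "jspan (jnorm \<sigma> ` B) = NJ \<sigma>"
  proof
    show "jspan (jnorm \<sigma> ` B) \<subseteq> NJ \<sigma>" using jspan_least[OF jsubspace_NJ sub] .
    show "NJ \<sigma> \<subseteq> jspan (jnorm \<sigma> ` B)"
    proof
      fix n assume n: "n \<in> NJ \<sigma>"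
      then have "jsig \<sigma> n = n" using NJ_subset_jfixed unfolding jfixed_def by blast
      with B show "n \<in> jspan (jnorm \<sigma> ` B)" using NJ n by (intro free_family_jfixed) blast+
    qed
  qed
  then show ?thesis unfolding jbasis_def using sub free_family_jindep_jnorm[OF B] by blast
qed

lemma jfixed_jspan_orbits:
  assumes B: "free_family B" and NJ: "NJ \<sigma> \<subseteq> jspan (orbits B)"
  shows "jfixed \<sigma> (jspan (orbits B)) = NJ \<sigma>"
proof
  have span_eq: "jspan (jnorm \<sigma> ` B) = NJ \<sigma>"
    using jbasis_jnorm_image[OF B NJ] unfolding jbasis_def by blast
  show "jfixed \<sigma> (jspan (orbits B)) \<subseteq> NJ \<sigma>"
  proof
    fix m assume "m \<in> jfixed \<sigma> (jspan (orbits B))"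
    then have "m \<in> jspan (jnorm \<sigma> ` B)" unfolding jfixed_def by (auto intro: free_family_jfixed[OF B])
    then show "m \<in> NJ \<sigma>" unfolding span_eq .
  qed
  show "NJ \<sigma> \<subseteq> jfixed \<sigma> (jspan (orbits B))"
    using NJ NJ_subset_jfixed unfolding jfixed_def by blast
qed

lemma jmax_free_jbasis_NJ:
  assumes M: "jmax_free \<sigma> M" and B: "jfree_basis \<sigma> B M"
  shows "\<exists>C. jbasis C (NJ \<sigma>) \<and> B \<approx> C"
proof -
  have "M \<subseteq> Jgrp" using M unfolding jmax_free_def jfree_def jsubmodule_def jsubspace_def by blast
  then have fam: "free_family B" and M_eq: "jspan (orbits B) = M" using jfree_basisD[OF B] by auto
  have "NJ \<sigma> \<subseteq> jspan (orbits B)"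
  proof (rule NJ_subset_jspan_orbits[OF fam])
    fix A assume "A \<in> Jgrp" "free_family (insert A B)"
    have "jfree \<sigma> (jspan (orbits (insert A B)))"
      using \<open>free_family (insert A B)\<close> by (rule jfree_jspan_orbits)
    moreover have "M \<subseteq> jspan (orbits (insert A B))" unfolding M_eq[symmetric] by (rule jspan_mono) blast
    ultimately have "jspan (orbits (insert A B)) = M" using M unfolding jmax_free_def by blast
    moreover have "A \<in> jspan (orbits (insert A B))" using \<open>A \<in> Jgrp\<close> by (intro jspan_base) auto
    ultimately show "A \<in> jspan (orbits B)" using M_eq by simp
  qed
  then have "jbasis (jnorm \<sigma> ` B) (NJ \<sigma>)" by (rule jbasis_jnorm_image[OF fam])
  moreover have "B \<approx> jnorm \<sigma> ` B"
    using eqpoll_sym[OF inj_on_image_eqpoll_self[OF free_family_inj_on_jnorm[OF fam]]] .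
  ultimately show ?thesis by blast
qed

lemma ex_free_submodule_jfixed_NJ:
  obtains Y where "jfree \<sigma> Y" "jfixed \<sigma> Y = NJ \<sigma>" "NJ \<sigma> \<subseteq> jnorm \<sigma> ` Y"
proof -
  obtain B where B: "free_family B" and max: "\<And>B'. free_family B' \<Longrightarrow> B \<subseteq> B' \<Longrightarrow> B' = B"
    using ex_maximal_free_family by blast
  have BJ: "B \<subseteq> Jgrp" using B unfolding free_family_def by blast
  let ?Y = "jspan (orbits B)"
  have NJ: "NJ \<sigma> \<subseteq> ?Y"
  proof (rule NJ_subset_jspan_orbits[OF B])
    fix A assume "A \<in> Jgrp" "free_family (insert A B)"
    then have "A \<in> B" using max by blast
    then show "A \<in> ?Y" using \<open>A \<in> Jgrp\<close> by (intro jspan_base) auto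
  qed
  have "NJ \<sigma> = jspan (jnorm \<sigma> ` B)" using jbasis_jnorm_image[OF B NJ] unfolding jbasis_def by blast
  also have "\<dots> \<subseteq> jnorm \<sigma> ` ?Y"
  proof (rule jspan_least)
    show "jsubspace (jnorm \<sigma> ` ?Y)"
      using jsubspace_image_jnorm[OF jsubspace_jspan[OF orbits_subset_Jgrp[OF BJ]]] .
    show "jnorm \<sigma> ` B \<subseteq> jnorm \<sigma> ` ?Y" using jspan_superset[OF orbits_subset_Jgrp[OF BJ]] by blast
  qed
  finally show thesis using that jfree_jspan_orbits[OF B] jfixed_jspan_orbits[OF B NJ] by blast
qed

section \<open>Fixed classes that are not norms\<close>

lemma hilbert90:
  assumes "w * \<sigma> w = 1"
  obtains g where "g \<noteq> 0" "\<sigma> g = w * g"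
proof (cases "1 + \<sigma> w = 0")
  case False
  have "\<sigma> (1 + \<sigma> w) = w * (1 + \<sigma> w)" using assms by (simp add: sigma_add algebra_simps)
  then show thesis using False that by blast
next
  case True
  then have "\<sigma> w = -1" by (simp add: add_eq_0_iff)
  then have w: "w = -1" using sigma_minus[of 1] by (metis sigma_sigma sigma_one)
  obtain t where t: "\<sigma> t \<noteq> t" using sigma_not_id by blast
  have "\<sigma> (t - \<sigma> t) = \<sigma> t - t" using sigma_add[of t "- \<sigma> t"] sigma_minus[of "\<sigma> t"] by simp
  then have "\<sigma> (t - \<sigma> t) = w * (t - \<sigma> t)" unfolding w by simp
  moreover have "t - \<sigma> t \<noteq> 0" using t by simp
  ultimately show thesis using that by blast
qed

lemma sigma_ne_sign_mult:
  assumes char: "(2::'k) \<noteq> 0" and u: "u * \<sigma> u = -1" and t: "t \<noteq> 0" and c: "c = 1 \<or> c = -1"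
  shows "\<sigma> t \<noteq> c * (u * t)"
proof
  assume eq: "\<sigma> t = c * (u * t)"
  have sc: "\<sigma> c = c" using c sigma_minus[of 1] by auto
  have "t = \<sigma> (\<sigma> t)" by simp
  also have "\<dots> = c * (\<sigma> u * (c * (u * t)))" using eq sc by (simp add: sigma_mult)
  also have "\<dots> = (c * c) * (u * \<sigma> u) * t" by (simp only: mult_ac)
  also have "\<dots> = - t" using c u by auto
  finally have "t + t = 0" by (metis add.right_inverse)
  then have "2 * t = 0" by (simp only: mult_2)
  then show False using t char by simp
qed

lemma sqclass_notin_NJ:
  assumes char: "(2::'k) \<noteq> 0" and u: "u * \<sigma> u = -1" and g: "\<sigma> g = u\<^sup>2 * g"
  shows "sqclass g \<notin> NJ \<sigma>"
proof
  assume "sqclass g \<in> NJ \<sigma>"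
  then obtain A where A: "A \<in> Jgrp" "sqclass g = jnorm \<sigma> A" unfolding NJ_def by blast
  then obtain e where e: "e \<noteq> 0" "A = sqclass e" unfolding Jgrp_iff by blast
  have "sqclass g = sqclass (e * \<sigma> e)" using A(2) unfolding e(2) jnorm_sqclass .
  then have "g \<in> sqclass (e * \<sigma> e)" using sqclass_self_mem[of g] by simp
  then obtain t where t: "t \<noteq> 0" "g = e * \<sigma> e * t\<^sup>2" unfolding sqclass_def by blast
  have "e * \<sigma> e * (\<sigma> t)\<^sup>2 = \<sigma> g" using t(2) by (simp add: sigma_mult sigma_power2 mult_ac)
  also have "\<dots> = e * \<sigma> e * (u * t)\<^sup>2" using g t(2) by (simp add: power_mult_distrib mult_ac)
  finally have "(\<sigma> t)\<^sup>2 = (u * t)\<^sup>2" using e(1) by simp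
  then obtain c where "c = 1 \<or> c = -1" "\<sigma> t = c * (u * t)"
    unfolding power2_eq_iff by (metis mult_minus_left mult_1)
  then show False using sigma_ne_sign_mult[OF char u t(1)] by blast
qed

lemma ex_fixed_notin_NJ:
  assumes char: "(2::'k) \<noteq> 0" and u: "u \<noteq> 0" "u * \<sigma> u = -1"
  obtains g where "g \<in> jfixed \<sigma> Jgrp" "g \<notin> NJ \<sigma>"
proof -
  have "(u * u) * \<sigma> (u * u) = (u * \<sigma> u) * (u * \<sigma> u)" by (simp add: sigma_mult mult_ac)
  also have "\<dots> = 1" using u(2) by simp
  finally obtain \<gamma> where \<gamma>: "\<gamma> \<noteq> 0" "\<sigma> \<gamma> = (u * u) * \<gamma>" by (rule hilbert90)
  have \<gamma>J: "sqclass \<gamma> \<in> Jgrp" using \<gamma>(1) Jgrp_iff by blast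
  have "jsig \<sigma> (sqclass \<gamma>) = jmul (sqclass (u * u)) (sqclass \<gamma>)"
    using \<gamma>(2) by (simp add: jsig_sqclass jmul_sqclass)
  also have "\<dots> = sqclass \<gamma>" using u(1) \<gamma>J by (simp add: sqclass_square)
  finally have "sqclass \<gamma> \<in> jfixed \<sigma> Jgrp" unfolding jfixed_def using \<gamma>J by blast
  moreover have "sqclass \<gamma> \<notin> NJ \<sigma>"
    using sqclass_notin_NJ[OF char u(2)] \<gamma>(2) by (simp add: power2_eq_square)
  ultimately show thesis by (rule that)
qed

lemma ex_summand_X:
  assumes char: "(2::'k) \<noteq> 0"
  shows "\<exists>X. jsubspace X \<and> X \<subseteq> jfixed \<sigma> Jgrp \<and> NJ \<sigma> \<inter> X = {jone} \<and>
    ((\<exists>u. u \<noteq> 0 \<and> u * \<sigma> u = -1) \<longrightarrow> (\<exists>B. jbasis B X \<and> card B = 1 \<and> finite B)) \<and>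
    (\<not> (\<exists>u. u \<noteq> 0 \<and> u * \<sigma> u = -1) \<longrightarrow> X = {jone})"
proof (cases "\<exists>u. u \<noteq> 0 \<and> u * \<sigma> u = -1")
  case False
  show ?thesis
  proof (intro exI[of _ "{jone}"] conjI)
    show "{jone} \<subseteq> jfixed \<sigma> Jgrp" unfolding jfixed_def by simp
    show "NJ \<sigma> \<inter> {jone} = {jone}" using jsubspaceD(2)[OF jsubspace_NJ] by blast
  qed (use False jsubspace_jone in blast)+
next
  case True
  then obtain g where g: "g \<in> jfixed \<sigma> Jgrp" "g \<notin> NJ \<sigma>" using ex_fixed_notin_NJ[OF char] by blast
  have gJ: "g \<in> Jgrp" using g(1) unfolding jfixed_def by blast
  have "g \<noteq> jone" using g(2) jsubspaceD(2)[OF jsubspace_NJ] by blast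
  have span: "jspan {g} = {jone, g}"
    using jspan_insert[OF gJ, of "{}"] gJ by (simp add: jspan_empty insert_commute)
  show ?thesis
  proof (intro exI[of _ "{jone, g}"] conjI)
    show "jsubspace {jone, g}" using jsubspace_jspan[of "{g}"] gJ unfolding span by simp
    show "{jone, g} \<subseteq> jfixed \<sigma> Jgrp" using g(1) unfolding jfixed_def by simp
    show "NJ \<sigma> \<inter> {jone, g} = {jone}" using g(2) jsubspaceD(2)[OF jsubspace_NJ] by blast
    have "jbasis {g} {jone, g}"
      unfolding jbasis_def jindep_def using span \<open>g \<noteq> jone\<close> by (simp add: jspan_empty)
    then have "\<exists>B. jbasis B {jone, g} \<and> card B = 1 \<and> finite B" by (intro exI[of _ "{g}"]) simp
    then show "(\<exists>u. u \<noteq> 0 \<and> u * \<sigma> u = -1) \<longrightarrow> (\<exists>B. jbasis B {jone, g} \<and> card B = 1 \<and> finite B)"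
      by blast
  qed (use True in simp)
qed

lemma jdirect3_fixed_decomposition:
  assumes Y: "jsubspace Y" "jfixed \<sigma> Y = NJ \<sigma>" "NJ \<sigma> \<subseteq> jnorm \<sigma> ` Y"
    and X: "jsubspace X" "X \<subseteq> jfixed \<sigma> Jgrp" "NJ \<sigma> \<inter> X = {jone}"
    and Z: "jsubspace Z" "Z \<subseteq> jfixed \<sigma> Jgrp" "{jmul n x | n x. n \<in> NJ \<sigma> \<and> x \<in> X} \<inter> Z = {jone}"
    and fixed_decomp: "\<And>v. v \<in> jfixed \<sigma> Jgrp \<Longrightarrow> \<exists>n\<in>NJ \<sigma>. \<exists>x\<in>X. \<exists>z\<in>Z. v = jmul (jmul n x) z"
  shows "jdirect3 Jgrp X Y Z"
proof -
  have XJ: "X \<subseteq> Jgrp" and YJ: "Y \<subseteq> Jgrp" and ZJ: "Z \<subseteq> Jgrp"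
    using X(1) Y(1) Z(1) jsubspaceD(1) by auto
  have NJ_Y: "NJ \<sigma> \<subseteq> Y" using Y(2) unfolding jfixed_def by blast
  show ?thesis
  proof (rule jdirect3I[OF X(1) Y(1) Z(1)])
    fix A :: "'k set" assume A: "A \<in> Jgrp"
    then obtain y1 where y1: "y1 \<in> Y" "jnorm \<sigma> A = jnorm \<sigma> y1" using Y(3) unfolding NJ_def by blast
    have y1J: "y1 \<in> Jgrp" using y1(1) YJ by blast
    have "jnorm \<sigma> (jmul A y1) = jone" using y1(2) A y1J by (simp add: jnorm_jmul)
    then have "jmul A y1 \<in> jfixed \<sigma> Jgrp" using jnorm_eq_jone_iff A y1J unfolding jfixed_def by simp
    then obtain n x z where nxz: "n \<in> NJ \<sigma>" "x \<in> X" "z \<in> Z" and eq: "jmul A y1 = jmul (jmul n x) z"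
      using fixed_decomp by blast
    have "A = jmul (jmul A y1) y1" using A y1J by (simp add: jmul_assoc)
    also have "\<dots> = jmul x (jmul (jmul n y1) z)" unfolding eq by (simp only: jmul_ac)
    finally have "A = jmul x (jmul (jmul n y1) z)" .
    moreover have "jmul n y1 \<in> Y" using nxz(1) NJ_Y y1(1) jsubspaceD(3)[OF Y(1)] by blast
    ultimately show "\<exists>x\<in>X. \<exists>y\<in>Y. \<exists>z\<in>Z. A = jmul x (jmul y z)" using nxz(2,3) by blast
  next
    fix x y z assume xyz: "x \<in> X" "y \<in> Y" "z \<in> Z" and eq: "jmul x (jmul y z) = jone"
    have J: "x \<in> Jgrp" "y \<in> Jgrp" "z \<in> Jgrp" using xyz XJ YJ ZJ by blast+
    have "x = jmul y z" using eq jmul_eq_jone_iff[of x "jmul y z"] J by simp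
    then have y_eq: "y = jmul x z" using J by (simp add: jmul_assoc)
    have "jsig \<sigma> x = x" "jsig \<sigma> z = z" using xyz(1,3) X(2) Z(2) unfolding jfixed_def by blast+
    then have "jsig \<sigma> y = y" unfolding y_eq jsig_jmul by simp
    then have y_NJ: "y \<in> NJ \<sigma>" using Y(2) xyz(2) unfolding jfixed_def by blast
    have "z = jmul y x" using y_eq J by (simp add: jmul_ac)
    then have "z \<in> {jmul n x | n x. n \<in> NJ \<sigma> \<and> x \<in> X} \<inter> Z" using y_NJ xyz by blast
    then have "z = jone" using Z(3) by blast
    then have "y = x" using y_eq J by simp
    then have "x \<in> NJ \<sigma> \<inter> X" using y_NJ xyz(1) by blast
    then have "x = jone" using X(3) by blast
    then show "x = jone \<and> y = jone \<and> z = jone" using \<open>y = x\<close> \<open>z = jone\<close> by simp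
  qed
qed

lemma ex_decomposition:
  assumes char: "(2::'k) \<noteq> 0"
  shows "\<exists>X Y Z. jsubmodule \<sigma> X \<and> jsubmodule \<sigma> Y \<and> jsubmodule \<sigma> Z \<and>
             X \<subseteq> Jgrp \<and> Y \<subseteq> Jgrp \<and> Z \<subseteq> Jgrp \<and>
             jdirect3 Jgrp X Y Z \<and>
             ((\<exists>u. u \<noteq> 0 \<and> u * \<sigma> u = -1) \<longrightarrow> (\<exists>B. jbasis B X \<and> card B = 1 \<and> finite B)) \<and>
             (\<not> (\<exists>u. u \<noteq> 0 \<and> u * \<sigma> u = -1) \<longrightarrow> X = {jone}) \<and>
             jfree \<sigma> Y \<and> jfixed \<sigma> Y = NJ \<sigma> \<and>
             (\<forall>A\<in>Z. jsig \<sigma> A = A)"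
proof -
  obtain Y where Y: "jfree \<sigma> Y" "jfixed \<sigma> Y = NJ \<sigma>" "NJ \<sigma> \<subseteq> jnorm \<sigma> ` Y"
    by (rule ex_free_submodule_jfixed_NJ)
  have Y_sub: "jsubmodule \<sigma> Y" using Y(1) unfolding jfree_def by blast
  then have Y_space: "jsubspace Y" unfolding jsubmodule_def by blast
  obtain X where X: "jsubspace X" "X \<subseteq> jfixed \<sigma> Jgrp" "NJ \<sigma> \<inter> X = {jone}"
    "(\<exists>u. u \<noteq> 0 \<and> u * \<sigma> u = -1) \<longrightarrow> (\<exists>B. jbasis B X \<and> card B = 1 \<and> finite B)"
    "\<not> (\<exists>u. u \<noteq> 0 \<and> u * \<sigma> u = -1) \<longrightarrow> X = {jone}"
    using ex_summand_X[OF char] by (elim exE conjE) (rule that)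
  define U where "U = {jmul n x | n x. n \<in> NJ \<sigma> \<and> x \<in> X}"
  have fixed_space: "jsubspace (jfixed \<sigma> Jgrp)" by (rule jsubspace_jfixed[OF jsubspace_Jgrp])
  have U: "jsubspace U" unfolding U_def by (rule jsubspace_jmul_set[OF jsubspace_NJ X(1)])
  have "U \<subseteq> jfixed \<sigma> Jgrp"
  proof
    fix u assume "u \<in> U"
    then obtain n x where "n \<in> NJ \<sigma>" "x \<in> X" "u = jmul n x" unfolding U_def by blast
    then show "u \<in> jfixed \<sigma> Jgrp" using NJ_subset_jfixed X(2) jsubspaceD(3)[OF fixed_space, of n x] by blast
  qed
  with U fixed_space obtain Z where Z: "jsubspace Z" "Z \<subseteq> jfixed \<sigma> Jgrp" "U \<inter> Z = {jone}"
    and U_Z: "\<And>v. v \<in> jfixed \<sigma> Jgrp \<Longrightarrow> \<exists>u\<in>U. \<exists>z\<in>Z. v = jmul u z"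
    by (rule jsubspace_complement) (rule that)
  have "jdirect3 Jgrp X Y Z"
  proof (rule jdirect3_fixed_decomposition[OF Y_space Y(2,3) X(1-3) Z(1,2) Z(3)[unfolded U_def]])
    fix v assume "v \<in> jfixed \<sigma> Jgrp"
    then obtain u z where "u \<in> U" "z \<in> Z" "v = jmul u z" using U_Z by blast
    then show "\<exists>n\<in>NJ \<sigma>. \<exists>x\<in>X. \<exists>z\<in>Z. v = jmul (jmul n x) z" unfolding U_def by blast
  qed
  moreover have "jsubmodule \<sigma> X" "jsubmodule \<sigma> Z"
    using jsubmodule_if_fixed[OF X(1,2)] jsubmodule_if_fixed[OF Z(1,2)] .
  moreover have "X \<subseteq> Jgrp" "Y \<subseteq> Jgrp" "Z \<subseteq> Jgrp"
    using jsubspaceD(1)[OF X(1)] jsubspaceD(1)[OF Y_space] jsubspaceD(1)[OF Z(1)] .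
  moreover have "\<forall>A\<in>Z. jsig \<sigma> A = A" using Z(2) unfolding jfixed_def by blast
  ultimately show ?thesis using Y_sub Y(1,2) X(4,5) by (intro exI[of _ X] exI[of _ Y] exI[of _ Z]) simp
qed

end

theorem theorem2:
  fixes \<sigma> :: "'k::field \<Rightarrow> 'k"
  assumes char: "(2::'k) \<noteq> 0"
    and aut: "qaut \<sigma>"
  shows "(\<exists>X Y Z. jsubmodule \<sigma> X \<and> jsubmodule \<sigma> Y \<and> jsubmodule \<sigma> Z \<and>
             X \<subseteq> Jgrp \<and> Y \<subseteq> Jgrp \<and> Z \<subseteq> Jgrp \<and>
             jdirect3 Jgrp X Y Z \<and>
             ((\<exists>u. u \<noteq> 0 \<and> u * \<sigma> u = -1) \<longrightarrow> (\<exists>B. jbasis B X \<and> card B = 1 \<and> finite B)) \<and>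
             (\<not> (\<exists>u. u \<noteq> 0 \<and> u * \<sigma> u = -1) \<longrightarrow> X = {jone}) \<and>
             jfree \<sigma> Y \<and> jfixed \<sigma> Y = NJ \<sigma> \<and>
             (\<forall>A\<in>Z. jsig \<sigma> A = A))
       \<and> (\<forall>M B. jmax_free \<sigma> M \<and> jfree_basis \<sigma> B M \<longrightarrow>
             (\<exists>C. jbasis C (NJ \<sigma>) \<and> B \<approx> C))"
proof -
  interpret quadratic_galois \<sigma> using aut by unfold_locales
  have "\<forall>M B. jmax_free \<sigma> M \<and> jfree_basis \<sigma> B M \<longrightarrow> (\<exists>C. jbasis C (NJ \<sigma>) \<and> B \<approx> C)"
    by (intro allI impI, elim conjE) (rule jmax_free_jbasis_NJ)
  with ex_decomposition[OF char] show ?thesis by (rule conjI)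
qed

end
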